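(* Let $\mathcal{L}$ be a Lindbladian on $\mathbb{C}^d$, let $(\pi_t)_{t\ge0}$ be program states on a finite-dimensional space $\mathcal{H}_P$ such that $t\mapsto\pi_t$ is real-analytic on $[0,\infty)$, and let $\mathcal{P}$ be a linear map from operators on $\mathbb{C}^d\otimes\mathcal{H}_P$ to operators on $\mathbb{C}^d$ such that $\mathcal{P}(\cdot\otimes\pi_t)=e^{t\mathcal{L}}$ for all $t\in[0,T]$, for some $T>0$. Then $\mathcal{P}(\cdot\otimes\pi_t)=e^{t\mathcal{L}}$ also holds for every $t\ge T$.
   Context: A Lindbladian has GKSL form $\mathcal{L}(\rho)=-i[H,\rho]+\sum_j\gamma_j(L_j\rho L_j^\dagger-\frac12\{L_j^\dagger L_j,\rho\})$ and generates the semigroup $(e^{t\mathcal{L}})_{t\ge0}$. *)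

theory Defs
  imports "HOL-Analysis.Analysis"
begin

type_synonym 'n op = "complex^'n^'n"

definition adj :: "'n::finite op \<Rightarrow> 'n op" where
  "adj A = (\<chi> i j. cnj (A $ j $ i))"

definition cscale :: "complex \<Rightarrow> 'n::finite op \<Rightarrow> 'n op" where
  "cscale c A = (\<chi> i j. c * A $ i $ j)"

definition hermitian :: "'n::finite op \<Rightarrow> bool" where
  "hermitian A \<longleftrightarrow> adj A = A"

definition trace_op :: "'n::finite op \<Rightarrow> complex" where
  "trace_op A = (\<Sum>i\<in>UNIV. A $ i $ i)"

definition psd :: "'n::finite op \<Rightarrow> bool" where
  "psd A \<longleftrightarrow> (\<forall>v :: complex^'n.
      Im (\<Sum>i\<in>UNIV. \<Sum>j\<in>UNIV. cnj (v $ i) * A $ i $ j * v $ j) = 0 \<and>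
      Re (\<Sum>i\<in>UNIV. \<Sum>j\<in>UNIV. cnj (v $ i) * A $ i $ j * v $ j) \<ge> 0)"

definition density_op :: "'n::finite op \<Rightarrow> bool" where
  "density_op A \<longleftrightarrow> psd A \<and> trace_op A = 1"

definition tensor_op :: "'d::finite op \<Rightarrow> 'p::finite op \<Rightarrow> ('d \<times> 'p) op" where
  "tensor_op A B = (\<chi> x y. A $ fst x $ fst y * B $ snd x $ snd y)"

definition clinear_map :: "('a::finite op \<Rightarrow> 'b::finite op) \<Rightarrow> bool" where
  "clinear_map P \<longleftrightarrow> (\<forall>A B. P (A + B) = P A + P B) \<and> (\<forall>c A. P (cscale c A) = cscale c (P A))"

definition lindbladian :: "('d::finite op \<Rightarrow> 'd op) \<Rightarrow> bool" where
  "lindbladian \<L> \<longleftrightarrow> (\<exists>(H :: 'd op) (J :: nat set) (g :: nat \<Rightarrow> real) (Ls :: nat \<Rightarrow> 'd op).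
     hermitian H \<and> finite J \<and> (\<forall>j\<in>J. g j \<ge> 0) \<and>
     (\<forall>\<rho>. \<L> \<rho> = cscale (-\<i>) (H ** \<rho> - \<rho> ** H) +
        (\<Sum>j\<in>J. cscale (complex_of_real (g j))
            (Ls j ** \<rho> ** adj (Ls j)
             - cscale (1/2) (adj (Ls j) ** Ls j ** \<rho> + \<rho> ** (adj (Ls j) ** Ls j))))))"

definition lind_exp :: "('d::finite op \<Rightarrow> 'd op) \<Rightarrow> real \<Rightarrow> 'd op \<Rightarrow> 'd op" where
  "lind_exp \<L> t \<rho> = (\<Sum>n. (t ^ n / fact n) *\<^sub>R (\<L> ^^ n) \<rho>)"

definition real_analytic_on :: "(real \<Rightarrow> 'a::real_normed_vector) \<Rightarrow> real set \<Rightarrow> bool" where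
  "real_analytic_on f S \<longleftrightarrow> (\<forall>x\<in>S. \<exists>r>0. \<exists>c :: nat \<Rightarrow> 'a.
      \<forall>y\<in>S. \<bar>y - x\<bar> < r \<longrightarrow> (\<lambda>n. (y - x) ^ n *\<^sub>R c n) sums f y)"

end

theory Submission
  imports Defs "HOL-Complex_Analysis.Cauchy_Integral_Formula"
begin

(* Read entrywise, both t \<mapsto> P(\<rho> \<otimes> \<pi>_t) and t \<mapsto> e^{tL} \<rho> are real-analytic on [0, \<infinity>):
   the first is a real-linear image of \<pi>, the second an entire power series in t.  Their
   difference h vanishes on [0, T].  If h did not vanish everywhere, let S be the supremum of
   the s such that h vanishes on [0, s].  The power series of h at S sums to 0 on a left
   neighbourhood of S, so all its coefficients are 0 and h also vanishes right of S,
   contradicting the choice of S. *)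

lemma cscale_of_real: "cscale (of_real r) A = r *\<^sub>R A"
  by (simp add: vec_eq_iff cscale_def scaleR_conv_of_real[where 'a=complex])

lemma linear_cscale: "linear (cscale c :: 'n::finite op \<Rightarrow> 'n op)"
  by (rule linearI) (simp_all add: vec_eq_iff cscale_def scaleR_conv_of_real algebra_simps)

lemma linear_matrix_mult_left:
  "linear (\<lambda>B :: 'a::real_algebra_1^'k^'n. A ** B)"
  by (rule linearI)
    (simp_all add: vec_eq_iff matrix_matrix_mult_def sum.distrib scaleR_sum_right distrib_left)

lemma linear_matrix_mult_right:
  "linear (\<lambda>A :: 'a::real_algebra_1^'n^'m. A ** B)"
  by (rule linearI)
    (simp_all add: vec_eq_iff matrix_matrix_mult_def sum.distrib scaleR_sum_right distrib_right)

lemma lindbladian_imp_linear: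
  assumes "lindbladian \<L>"
  shows "linear \<L>"
proof -
  obtain H J g Ls where "\<L> = (\<lambda>\<rho>. cscale (-\<i>) (H ** \<rho> - \<rho> ** H) +
        (\<Sum>j\<in>(J::nat set). cscale (complex_of_real (g j))
            (Ls j ** \<rho> ** adj (Ls j)
             - cscale (1/2) (adj (Ls j) ** Ls j ** \<rho> + \<rho> ** (adj (Ls j) ** Ls j)))))"
    using assms unfolding lindbladian_def fun_eq_iff by blast
  then show ?thesis
    by (simp only:) (intro linear_compose_add linear_compose_sub linear_compose_sum ballI
        linear_compose[OF _ linear_cscale, unfolded o_def]
        linear_compose[OF linear_matrix_mult_left linear_matrix_mult_right, unfolded o_def]
        linear_matrix_mult_left linear_matrix_mult_right)
qed

lemma clinear_map_imp_linear:
  assumes "clinear_map P"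
  shows "linear P"
  using assms by (intro linearI) (auto simp: clinear_map_def simp flip: cscale_of_real)

lemma linear_tensor_op: "linear (tensor_op A)"
  by (rule linearI) (simp_all add: vec_eq_iff tensor_op_def distrib_left)

lemma norm_funpow_le:
  fixes L :: "'a::real_normed_vector \<Rightarrow> 'a"
  assumes "\<And>x. norm (L x) \<le> norm x * K" and "K \<ge> 0"
  shows "norm ((L ^^ n) x) \<le> K ^ n * norm x"
proof (induction n)
  case (Suc n)
  have "norm ((L ^^ Suc n) x) \<le> norm ((L ^^ n) x) * K"
    using assms(1) by simp
  also have "\<dots> \<le> K ^ n * norm x * K"
    using Suc assms(2) by (rule mult_right_mono)
  finally show ?case
    by (simp add: algebra_simps)
qed simp

lemma summable_exp_series_norm_funpow:
  fixes L :: "'a::real_normed_vector \<Rightarrow> 'a"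
  assumes "bounded_linear L"
  shows "summable (\<lambda>n. r ^ n / fact n * norm ((L ^^ n) x))"
proof -
  obtain K where K: "K > 0" "\<And>x. norm (L x) \<le> norm x * K"
    using bounded_linear.pos_bounded[OF assms] by blast
  show ?thesis
  proof (rule summable_comparison_test')
    show "summable (\<lambda>n. norm x * (inverse (fact n) * (K * \<bar>r\<bar>) ^ n))"
      by (intro summable_mult summable_exp)
    fix n
    have "norm (r ^ n / fact n * norm ((L ^^ n) x)) = \<bar>r\<bar> ^ n / fact n * norm ((L ^^ n) x)"
      by (simp add: abs_mult power_abs)
    also have "\<dots> \<le> \<bar>r\<bar> ^ n / fact n * (K ^ n * norm x)"
      using K by (intro mult_left_mono norm_funpow_le) auto
    also have "\<dots> = norm x * (inverse (fact n) * (K * \<bar>r\<bar>) ^ n)"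
      by (simp add: field_simps power_mult_distrib)
    finally show "norm (r ^ n / fact n * norm ((L ^^ n) x)) \<le> \<dots>" .
  qed
qed

lemma summable_exp_series_funpow:
  fixes L :: "'a::banach \<Rightarrow> 'a"
  assumes "bounded_linear L"
  shows "summable (\<lambda>n. (t ^ n / fact n) *\<^sub>R (L ^^ n) x)"
  by (rule summable_norm_cancel, rule summable_comparison_test'[OF
        summable_exp_series_norm_funpow[OF assms, of "\<bar>t\<bar>" x]])
    (simp add: power_abs)

lemma lind_exp_nth_sums:
  fixes \<L> :: "'d::finite op \<Rightarrow> 'd op"
  assumes "linear \<L>"
  shows "(\<lambda>n. (\<L> ^^ n) \<rho> $ i $ j / fact n * of_real t ^ n) sums (lind_exp \<L> t \<rho> $ i $ j)"
proof -
  have "bounded_linear (\<lambda>X :: 'd op. X $ i $ j)"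
    by (rule bounded_linear_compose[OF bounded_linear_vec_nth bounded_linear_vec_nth])
  from bounded_linear.sums[OF this summable_sums[OF summable_exp_series_funpow]]
  show ?thesis
    using assms unfolding lind_exp_def
    by (simp add: linear_conv_bounded_linear scaleR_conv_of_real[where 'a=complex] field_simps)
qed

(* Re-centring the power series is left to complex analysis: its sum is entire, so its
   Taylor series at any point converges on the whole plane. *)
lemma real_analytic_on_entire_powser:
  fixes a :: "nat \<Rightarrow> complex"
  assumes "\<And>z. summable (\<lambda>n. a n * z ^ n)"
  shows "real_analytic_on (\<lambda>t. \<Sum>n. a n * of_real t ^ n) S"
  unfolding real_analytic_on_def
proof
  fix x
  define F where "F z = (\<Sum>n. a n * z ^ n)" for z
  have hol: "F holomorphic_on UNIV"
    unfolding holomorphic_on_def field_differentiable_def F_def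
    using termdiffs_strong_converges_everywhere[OF assms] has_field_derivative_at_within by blast
  have expansion: "(\<lambda>n. (y - x) ^ n *\<^sub>R ((deriv ^^ n) F (of_real x) / fact n))
      sums (\<Sum>n. a n * of_real y ^ n)" for y
  proof -
    have "complex_of_real y \<in> ball (of_real x) (\<bar>y - x\<bar> + 1)"
      by (simp add: dist_norm flip: of_real_diff)
    with hol have "(\<lambda>n. (deriv ^^ n) F (of_real x) / fact n * (of_real y - of_real x) ^ n)
        sums F (of_real y)"
      by (intro holomorphic_power_series) (auto elim: holomorphic_on_subset)
    then show ?thesis
      by (simp add: F_def scaleR_conv_of_real mult.commute)
  qed
  then show "\<exists>r>0. \<exists>c. \<forall>y\<in>S. \<bar>y - x\<bar> < r \<longrightarrow>
      (\<lambda>n. (y - x) ^ n *\<^sub>R c n) sums (\<Sum>n. a n * of_real y ^ n)"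
    by (intro exI[of _ 1] exI[of _ "\<lambda>n. (deriv ^^ n) F (of_real x) / fact n"]
        conjI zero_less_one ballI impI expansion)
qed

lemma real_analytic_on_lind_exp_nth:
  fixes \<L> :: "'d::finite op \<Rightarrow> 'd op"
  assumes "linear \<L>"
  shows "real_analytic_on (\<lambda>t. lind_exp \<L> t \<rho> $ i $ j) S"
proof -
  define a where "a n = (\<L> ^^ n) \<rho> $ i $ j / fact n" for n
  have "summable (\<lambda>n. a n * z ^ n)" for z
  proof (rule summable_comparison_test')
    show "summable (\<lambda>n. norm z ^ n / fact n * norm ((\<L> ^^ n) \<rho>))"
      using assms by (intro summable_exp_series_norm_funpow) (simp add: linear_conv_bounded_linear)
    fix n
    have "norm (a n * z ^ n) = norm z ^ n / fact n * norm ((\<L> ^^ n) \<rho> $ i $ j)"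
      by (simp add: a_def norm_mult norm_divide norm_power)
    also have "\<dots> \<le> norm z ^ n / fact n * norm ((\<L> ^^ n) \<rho>)"
      by (intro mult_left_mono order_trans[OF Finite_Cartesian_Product.norm_nth_le
            Finite_Cartesian_Product.norm_nth_le]) auto
    finally show "norm (a n * z ^ n) \<le> norm z ^ n / fact n * norm ((\<L> ^^ n) \<rho>)" .
  qed
  then have "real_analytic_on (\<lambda>t. \<Sum>n. a n * of_real t ^ n) S"
    by (rule real_analytic_on_entire_powser)
  moreover have "(\<Sum>n. a n * of_real t ^ n) = lind_exp \<L> t \<rho> $ i $ j" for t
    using lind_exp_nth_sums[OF assms] unfolding a_def by (rule sums_unique[symmetric])
  ultimately show ?thesis
    by simp
qed

lemma real_analytic_on_bounded_linear:
  assumes "bounded_linear f" and "real_analytic_on g S"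
  shows "real_analytic_on (\<lambda>x. f (g x)) S"
  unfolding real_analytic_on_def
proof
  fix x assume "x \<in> S"
  then obtain r c where "r > 0"
    and c: "\<forall>y\<in>S. \<bar>y - x\<bar> < r \<longrightarrow> (\<lambda>n. (y - x) ^ n *\<^sub>R c n) sums g y"
    using assms(2) unfolding real_analytic_on_def by blast
  have "(\<lambda>n. (y - x) ^ n *\<^sub>R f (c n)) sums f (g y)" if "y \<in> S" "\<bar>y - x\<bar> < r" for y
    using bounded_linear.sums[OF assms(1) c[rule_format, OF that]]
    by (simp add: linear_scale[OF bounded_linear.linear[OF assms(1)]])
  with \<open>r > 0\<close> show "\<exists>r>0. \<exists>c. \<forall>y\<in>S. \<bar>y - x\<bar> < r \<longrightarrow> (\<lambda>n. (y - x) ^ n *\<^sub>R c n) sums f (g y)"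
    by (intro exI[of _ r] conjI exI[of _ "\<lambda>n. f (c n)"]) auto
qed

lemma real_analytic_on_diff:
  assumes "real_analytic_on f S" and "real_analytic_on g S"
  shows "real_analytic_on (\<lambda>x. f x - g x) S"
  unfolding real_analytic_on_def
proof
  fix x assume "x \<in> S"
  obtain r1 c1 where "r1 > 0" and c1: "\<forall>y\<in>S. \<bar>y - x\<bar> < r1 \<longrightarrow> (\<lambda>n. (y - x) ^ n *\<^sub>R c1 n) sums f y"
    using assms(1) \<open>x \<in> S\<close> unfolding real_analytic_on_def by blast
  obtain r2 c2 where "r2 > 0" and c2: "\<forall>y\<in>S. \<bar>y - x\<bar> < r2 \<longrightarrow> (\<lambda>n. (y - x) ^ n *\<^sub>R c2 n) sums g y"
    using assms(2) \<open>x \<in> S\<close> unfolding real_analytic_on_def by blast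
  have "(\<lambda>n. (y - x) ^ n *\<^sub>R (c1 n - c2 n)) sums (f y - g y)"
    if "y \<in> S" "\<bar>y - x\<bar> < min r1 r2" for y
    using sums_diff[OF c1[rule_format] c2[rule_format]] that by (simp add: scaleR_diff_right)
  with \<open>r1 > 0\<close> \<open>r2 > 0\<close>
  show "\<exists>r>0. \<exists>c. \<forall>y\<in>S. \<bar>y - x\<bar> < r \<longrightarrow> (\<lambda>n. (y - x) ^ n *\<^sub>R c n) sums (f y - g y)"
    by (intro exI[of _ "min r1 r2"] conjI exI[of _ "\<lambda>n. c1 n - c2 n"]) auto
qed

lemma powser_vanishing_on_left_imp_coeff_0:
  fixes c :: "nat \<Rightarrow> 'a::{real_normed_field,banach}"
  assumes "s > 0" and vanish: "\<And>z. z \<in> {-s<..<0} \<Longrightarrow> (\<lambda>n. z ^ n *\<^sub>R c n) sums 0"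
  shows "c 0 = 0"
proof -
  define F where "F w = (\<Sum>n. c n * w ^ n)" for w :: 'a
  have powser: "(\<lambda>n. z ^ n *\<^sub>R c n) = (\<lambda>n. c n * of_real z ^ n)" for z
    by (simp add: scaleR_conv_of_real mult.commute)
  have "summable (\<lambda>n. c n * of_real (-s/2) ^ n)"
    using vanish[of "-s/2"] assms(1) unfolding powser by (simp add: sums_summable)
  then have "isCont F 0"
    unfolding F_def by (rule isCont_powser) (use assms(1) in simp)
  moreover have "((\<lambda>z. of_real z :: 'a) \<longlongrightarrow> 0) (at_left 0)"
    using tendsto_of_real[OF tendsto_ident_at[of 0 "{..<0}"]] by simp
  ultimately have "((\<lambda>z. F (of_real z)) \<longlongrightarrow> F 0) (at_left 0)"
    by (rule isCont_tendsto_compose)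
  moreover have "eventually (\<lambda>z. z \<in> {-s<..<0}) (at_left 0)"
    using assms(1) by (intro eventually_at_left_real) simp
  then have "eventually (\<lambda>z. F (of_real z) = 0) (at_left 0)"
  proof (rule eventually_mono)
    fix z assume "z \<in> {-s<..<0}"
    then have "(\<lambda>n. c n * of_real z ^ n) sums 0"
      using vanish powser by metis
    then show "F (of_real z) = 0"
      by (simp add: F_def sums_iff)
  qed
  then have "((\<lambda>z. F (of_real z)) \<longlongrightarrow> 0) (at_left 0)"
    by (rule tendsto_eventually)
  ultimately have "F 0 = 0"
    by (rule tendsto_unique[OF trivial_limit_at_left_real])
  then show ?thesis
    by (simp add: F_def)
qed

lemma powser_vanishing_on_left_imp_zero:
  fixes c :: "nat \<Rightarrow> 'a::{real_normed_field,banach}"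
  assumes "s > 0" and "\<And>z. z \<in> {-s<..<0} \<Longrightarrow> (\<lambda>n. z ^ n *\<^sub>R c n) sums 0"
  shows "c n = 0"
  using assms(2)
proof (induction n arbitrary: c)
  case 0
  with assms(1) show ?case
    by (rule powser_vanishing_on_left_imp_coeff_0)
next
  case (Suc n)
  have "c 0 = 0"
    using assms(1) Suc.prems by (rule powser_vanishing_on_left_imp_coeff_0)
  have "(\<lambda>k. z ^ k *\<^sub>R c (Suc k)) sums 0" if z: "z \<in> {-s<..<0}" for z
  proof -
    have "(\<lambda>k. z ^ Suc k *\<^sub>R c (Suc k)) sums 0"
      using sums_Suc_iff[of "\<lambda>k. z ^ k *\<^sub>R c k" 0] Suc.prems[OF z] \<open>c 0 = 0\<close> by simp
    then have "(\<lambda>k. inverse z *\<^sub>R (z ^ Suc k *\<^sub>R c (Suc k))) sums 0"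
      by (rule sums_scaleR_right[of _ 0, simplified])
    moreover have "inverse z *\<^sub>R (z ^ Suc k *\<^sub>R c (Suc k)) = z ^ k *\<^sub>R c (Suc k)" for k
      using z by (simp add: scaleR_scaleR field_simps)
    ultimately show ?thesis
      by (simp only:)
  qed
  then show ?case
    by (rule Suc.IH)
qed

lemma real_analytic_on_vanishing_left_imp_right:
  fixes h :: "real \<Rightarrow> 'a::{real_normed_field,banach}"
  assumes "real_analytic_on h {a..}" and "a < x" and "\<And>t. t \<in> {a..<x} \<Longrightarrow> h t = 0"
  obtains r where "r > 0" and "\<And>t. t \<in> {x..<x + r} \<Longrightarrow> h t = 0"
proof -
  obtain r c where "r > 0"
    and c: "\<forall>y\<in>{a..}. \<bar>y - x\<bar> < r \<longrightarrow> (\<lambda>n. (y - x) ^ n *\<^sub>R c n) sums h y"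
    using assms(1,2) unfolding real_analytic_on_def by (meson atLeast_iff less_imp_le)
  have "(\<lambda>n. z ^ n *\<^sub>R c n) sums 0" if "z \<in> {-min r (x - a)<..<0}" for z
    using c[rule_format, of "x + z"] assms(3)[of "x + z"] that by auto
  moreover have "min r (x - a) > 0"
    using \<open>r > 0\<close> assms(2) by simp
  ultimately have "c n = 0" for n
    using powser_vanishing_on_left_imp_zero by blast
  then have "h t = 0" if "t \<in> {x..<x + r}" for t
    using c[rule_format, of t] that assms(2) sums_unique2[OF sums_zero] by auto
  with \<open>r > 0\<close> show thesis
    by (rule that)
qed

lemma real_analytic_continuation_atLeast:
  fixes h :: "real \<Rightarrow> 'a::{real_normed_field,banach}"
  assumes "real_analytic_on h {a..}" and "a < b" and "\<And>t. t \<in> {a..b} \<Longrightarrow> h t = 0"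
    and "a \<le> t"
  shows "h t = 0"
proof (rule ccontr)
  assume "h t \<noteq> 0"
  define A where "A = {s. \<forall>u\<in>{a..s}. h u = 0}"
  have "b \<in> A"
    using assms(3) by (simp add: A_def)
  have "s < t" if "s \<in> A" for s
    using that assms(4) \<open>h t \<noteq> 0\<close> unfolding A_def by force
  then have "bdd_above A"
    by (meson bdd_aboveI less_imp_le)
  define S where "S = Sup A"
  have "b \<le> S"
    unfolding S_def using \<open>b \<in> A\<close> \<open>bdd_above A\<close> by (rule cSup_upper)
  have left: "h u = 0" if u: "u \<in> {a..<S}" for u
  proof -
    have "A \<noteq> {}"
      using \<open>b \<in> A\<close> by blast
    then obtain s where "s \<in> A" "u < s"
      using u less_cSup_iff[OF _ \<open>bdd_above A\<close>, of u] unfolding S_def by auto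
    with u show ?thesis
      unfolding A_def by auto
  qed
  have "a < S"
    using assms(2) \<open>b \<le> S\<close> by simp
  then obtain r where "r > 0" and right: "\<And>u. u \<in> {S..<S + r} \<Longrightarrow> h u = 0"
    using real_analytic_on_vanishing_left_imp_right[OF assms(1)] left by blast
  have "S + r / 2 \<in> A"
    unfolding A_def mem_Collect_eq
  proof
    fix u assume "u \<in> {a..S + r / 2}"
    with left right \<open>r > 0\<close> show "h u = 0"
      by (cases "u < S") auto
  qed
  then have "S + r / 2 \<le> S"
    unfolding S_def using \<open>bdd_above A\<close> by (rule cSup_upper)
  with \<open>r > 0\<close> show False
    by simp
qed

theorem lemma14:
  fixes \<L> :: "'d::finite op \<Rightarrow> 'd op"
    and \<pi> :: "real \<Rightarrow> 'p::finite op"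
    and P :: "('d \<times> 'p) op \<Rightarrow> 'd op"
    and T :: real
  assumes "lindbladian \<L>"
    and "\<forall>t\<ge>0. density_op (\<pi> t)"
    and "real_analytic_on \<pi> {0..}"
    and "clinear_map P"
    and "T > 0"
    and "\<forall>t\<in>{0..T}. \<forall>\<rho>. P (tensor_op \<rho> (\<pi> t)) = lind_exp \<L> t \<rho>"
  shows "\<forall>t\<ge>T. \<forall>\<rho>. P (tensor_op \<rho> (\<pi> t)) = lind_exp \<L> t \<rho>"
proof (intro allI impI)
  fix t :: real and \<rho> :: "'d op"
  assume "t \<ge> T"
  have "linear (\<lambda>B. P (tensor_op \<rho> B))"
    using linear_compose[OF linear_tensor_op clinear_map_imp_linear[OF assms(4)]]
    by (simp add: o_def)
  then have entry: "bounded_linear (\<lambda>B. P (tensor_op \<rho> B) $ i $ j)" for i j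
    by (intro bounded_linear_compose[OF bounded_linear_vec_nth]) (simp add: linear_conv_bounded_linear)
  have "P (tensor_op \<rho> (\<pi> t)) $ i $ j - lind_exp \<L> t \<rho> $ i $ j = 0" for i j
  proof (rule real_analytic_continuation_atLeast[OF _ \<open>T > 0\<close>])
    show "real_analytic_on (\<lambda>s. P (tensor_op \<rho> (\<pi> s)) $ i $ j - lind_exp \<L> s \<rho> $ i $ j) {0..}"
      by (rule real_analytic_on_diff[OF real_analytic_on_bounded_linear[OF entry assms(3)]
            real_analytic_on_lind_exp_nth[OF lindbladian_imp_linear[OF assms(1)]]])
    show "P (tensor_op \<rho> (\<pi> s)) $ i $ j - lind_exp \<L> s \<rho> $ i $ j = 0" if "s \<in> {0..T}" for s
      using assms(6) that by simp
    show "0 \<le> t"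
      using \<open>t \<ge> T\<close> \<open>T > 0\<close> by simp
  qed
  then show "P (tensor_op \<rho> (\<pi> t)) = lind_exp \<L> t \<rho>"
    by (simp add: vec_eq_iff)
qed

end
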